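(* Let $\gamma_a,\gamma_s>0$, $\lambda\ge0$, $q>0$, $\sigma_B>0$, $\varepsilon_a\in(0,2)$, and let $\beta_a,\beta_s:\mathbb R\to\mathbb R$ be globally Lipschitz continuous with $\beta_a\ge0$, $\beta_s>0$. If $T_a^{(0)}\ge0$ and $T_s^{(0)}\ge0$, then the maximal solution of \[ \begin{cases} \gamma_a T_a'=-\lambda(T_a-T_s)+\varepsilon_a\sigma_B|T_s|^3T_s-2\varepsilon_a\sigma_B|T_a|^3T_a+q\beta_a(T_a),\\ \gamma_s T_s'=-\lambda(T_s-T_a)-\sigma_B|T_s|^3T_s+\varepsilon_a\sigma_B|T_a|^3T_a+q\beta_s(T_s),\\ T_a(0)=T_a^{(0)},\quad T_s(0)=T_s^{(0)} \end{cases} \] exists on $[0,+\infty)$. *)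

theory Defs
  imports "HOL-Analysis.Analysis"
begin

end

theory Submission
  imports Defs
begin

(* Replacing both temperatures by their clamps to [0, R] gives a globally Lipschitz vector field,
   whose solution exists for all times by Picard iteration. For this truncated system the quadrant
   of nonnegative temperatures is invariant, since each flux is nonnegative when its own temperature
   vanishes. Along solutions in the quadrant the weighted energy
   E = (eps_a + 2) gamma_a T_a + 4 eps_a gamma_s T_s satisfies
   E' = lam (3 eps_a - 2)(T_a - T_s) - sigma_B eps_a (2 - eps_a)(2 T_a^4 + T_s^4) + (forcing),
   and the quartic term is dissipative exactly because eps_a < 2, while the remaining terms grow at
   most linearly. Hence E' <= 0 once E is large, E stays below a bound K fixed by the data, and
   choosing R so large that E <= K + 1 forces both temperatures into [0, R] makes the truncation
   inactive: the truncated solution solves the original system. *)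

section \<open>Global solutions of globally Lipschitz autonomous systems\<close>

lemma has_integral_power_0:
  fixes t :: real
  assumes "0 \<le> t"
  shows "((\<lambda>s. s ^ n) has_integral t ^ Suc n / Suc n) {0..t}"
proof -
  have "((\<lambda>s. s ^ n) has_integral t ^ Suc n / Suc n - 0 ^ Suc n / Suc n) {0..t}"
    by (rule fundamental_theorem_of_calculus[OF assms])
      (auto intro!: derivative_eq_intros
        simp: has_real_derivative_iff_has_vector_derivative[symmetric] simp del: power_Suc of_nat_Suc)
  then show ?thesis by simp
qed

primrec picard_iter :: "('a::banach \<Rightarrow> 'a) \<Rightarrow> 'a \<Rightarrow> nat \<Rightarrow> real \<Rightarrow> 'a" where
  "picard_iter f \<xi> 0 = (\<lambda>t. \<xi>)"
| "picard_iter f \<xi> (Suc n) = (\<lambda>t. \<xi> + integral {0..t} (\<lambda>s. f (picard_iter f \<xi> n s)))"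

lemma continuous_on_picard_iter:
  assumes "continuous_on UNIV f"
  shows "continuous_on {0..T} (picard_iter f \<xi> n)"
proof (induction n)
  case (Suc n)
  have "(\<lambda>s. f (picard_iter f \<xi> n s)) integrable_on {0..T}"
    using continuous_on_compose2[OF assms Suc] by (auto intro: integrable_continuous_real)
  then show ?case
    by (auto intro!: continuous_intros indefinite_integral_continuous_1)
qed simp

lemma integrable_on_picard_iter:
  assumes "continuous_on UNIV f"
  shows "(\<lambda>s. f (picard_iter f \<xi> n s)) integrable_on {0..T}"
  using continuous_on_compose2[OF assms continuous_on_picard_iter[OF assms]]
  by (auto intro: integrable_continuous_real)

lemma picard_iter_step_le:
  fixes f :: "'a::banach \<Rightarrow> 'a"
  assumes lip: "lipschitz_on L UNIV f" and "0 \<le> t"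
  shows "norm (picard_iter f \<xi> (Suc n) t - picard_iter f \<xi> n t)
           \<le> norm (f \<xi>) * L ^ n * t ^ Suc n / fact (Suc n)"
  using \<open>0 \<le> t\<close>
proof (induction n arbitrary: t)
  case 0
  then show ?case by simp
next
  case (Suc n)
  let ?P = "picard_iter f \<xi>" and ?c = "norm (f \<xi>) * L ^ Suc n / fact (Suc n)"
  have int: "(\<lambda>s. f (?P m s)) integrable_on {0..t}" for m
    by (rule integrable_on_picard_iter[OF lipschitz_on_continuous_on[OF lip]])
  have power: "((\<lambda>s. ?c * s ^ Suc n) has_integral ?c * (t ^ Suc (Suc n) / Suc (Suc n))) {0..t}"
    using has_integral_power_0[OF Suc.prems] by (rule has_integral_mult_right)
  have step: "?P (Suc m) t = \<xi> + integral {0..t} (\<lambda>s. f (?P m s))" for m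
    by simp
  have "norm (?P (Suc (Suc n)) t - ?P (Suc n) t)
          = norm (integral {0..t} (\<lambda>s. f (?P (Suc n) s) - f (?P n s)))"
    unfolding step integral_diff[OF int int] by simp
  also have "\<dots> \<le> integral {0..t} (\<lambda>s. ?c * s ^ Suc n)"
  proof (rule integral_norm_bound_integral)
    fix s assume s: "s \<in> {0..t}"
    have "norm (f (?P (Suc n) s) - f (?P n s)) \<le> L * norm (?P (Suc n) s - ?P n s)"
      using lip by (rule lipschitz_on_normD) auto
    also have "\<dots> \<le> L * (norm (f \<xi>) * L ^ n * s ^ Suc n / fact (Suc n))"
      using Suc.IH[of s] s lipschitz_on_nonneg[OF lip] by (intro mult_left_mono) auto
    finally show "norm (f (?P (Suc n) s) - f (?P n s)) \<le> ?c * s ^ Suc n"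
      by (simp add: mult_ac)
  qed (use integrable_diff[OF int int] has_integral_integrable[OF power] in \<open>simp_all del: picard_iter.simps\<close>)
  also have "\<dots> = ?c * (t ^ Suc (Suc n) / Suc (Suc n))"
    using power by (rule integral_unique)
  also have "\<dots> = norm (f \<xi>) * L ^ Suc n * t ^ Suc (Suc n) / fact (Suc (Suc n))"
    by (simp add: field_simps)
  finally show ?case .
qed

lemma picard_iter_uniform_limit:
  fixes f :: "'a::banach \<Rightarrow> 'a"
  assumes lip: "lipschitz_on L UNIV f"
  obtains x where "\<And>T. uniform_limit {0..T} (picard_iter f \<xi>) x sequentially"
proof
  let ?P = "picard_iter f \<xi>"
  let ?D = "\<lambda>k t. ?P (Suc k) t - ?P k t"
  have L: "0 \<le> L" using lipschitz_on_nonneg[OF lip] .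
  fix T :: real
  have lim: "uniform_limit {0..T} (\<lambda>n t. \<Sum>k<n. ?D k t) (\<lambda>t. \<Sum>k. ?D k t) sequentially"
  proof (rule Weierstrass_m_test)
    fix n t assume t: "t \<in> {0..T}"
    have "norm (?D n t) \<le> norm (f \<xi>) * L ^ n * t ^ Suc n / fact (Suc n)"
      using picard_iter_step_le[OF lip] t by auto
    also have "\<dots> \<le> norm (f \<xi>) * L ^ n * T ^ Suc n / fact n"
      using t L by (intro frac_le mult_left_mono power_mono) (auto simp: fact_mono)
    also have "\<dots> = norm (f \<xi>) * T * (inverse (fact n) * (L * T) ^ n)"
      by (simp add: field_simps power_mult_distrib)
    finally show "norm (?D n t) \<le> norm (f \<xi>) * T * (inverse (fact n) * (L * T) ^ n)" .
  qed (intro summable_mult summable_exp)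
  have eq: "(\<lambda>n t. \<xi> + (\<Sum>k<n. ?D k t)) = ?P"
    by (intro ext, subst sum_lessThan_telescope) simp
  show "uniform_limit {0..T} ?P (\<lambda>t. \<xi> + (\<Sum>k. ?D k t)) sequentially"
    using uniform_limit_add[OF uniform_limit_const lim, of "\<lambda>t. \<xi>"] by (simp only: eq)
qed

lemma picard_global_solution:
  fixes f :: "'a::banach \<Rightarrow> 'a"
  assumes lip: "lipschitz_on L UNIV f"
  obtains x where "x 0 = \<xi>"
    and "\<And>t. 0 \<le> t \<Longrightarrow> (x has_vector_derivative f (x t)) (at t within {0..})"
proof -
  have cont: "continuous_on UNIV f"
    using lip by (rule lipschitz_on_continuous_on)
  obtain x where lim: "\<And>T. uniform_limit {0..T} (picard_iter f \<xi>) x sequentially"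
    using picard_iter_uniform_limit[OF lip] by blast
  have x_cont: "continuous_on {0..T} x" for T
    by (rule uniform_limit_theorem[OF _ lim]) (simp_all add: continuous_on_picard_iter[OF cont])
  have integral_eq: "x t = \<xi> + integral {0..t} (\<lambda>s. f (x s))" if "0 \<le> t" for t
  proof -
    have f_lim: "uniform_limit {0..t} (\<lambda>n s. f (picard_iter f \<xi> n s)) (\<lambda>s. f (x s)) sequentially"
      using lim lipschitz_on_uniformly_continuous[OF lip]
      by (rule uniform_limit_compose_uniformly_continuous_on) auto
    have "continuous_on {0..t} (\<lambda>s. f (picard_iter f \<xi> n s))" for n
      using continuous_on_compose2[OF cont continuous_on_picard_iter[OF cont]] by auto
    then obtain I J where I: "\<And>n. ((\<lambda>s. f (picard_iter f \<xi> n s)) has_integral I n) {0..t}"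
      and J: "((\<lambda>s. f (x s)) has_integral J) {0..t}" and "I \<longlonglongrightarrow> J"
      using uniform_limit_integral_cbox[where a = 0 and b = t, unfolded cbox_interval,
          OF f_lim _ trivial_limit_sequentially]
      by blast
    then have "(\<lambda>n. picard_iter f \<xi> (Suc n) t) \<longlonglongrightarrow> \<xi> + J"
      by (simp add: integral_unique[OF I] tendsto_add)
    moreover have "(\<lambda>n. picard_iter f \<xi> (Suc n) t) \<longlonglongrightarrow> x t"
      using LIMSEQ_Suc[OF tendsto_uniform_limitI[OF lim, of t t]] that by (simp del: picard_iter.simps)
    ultimately show ?thesis
      using LIMSEQ_unique integral_unique[OF J] by metis
  qed
  show thesis
  proof
    show "x 0 = \<xi>"
      using integral_eq[of 0] by simp
    fix t :: real
    assume "0 \<le> t"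
    have "continuous_on {0..t + 1} (\<lambda>s. f (x s))"
      using continuous_on_compose2[OF cont x_cont] by auto
    then have "((\<lambda>u. \<xi> + integral {0..u} (\<lambda>s. f (x s))) has_vector_derivative f (x t))
                 (at t within {0..t + 1})"
      using \<open>0 \<le> t\<close> by (auto intro!: derivative_eq_intros integral_has_vector_derivative)
    then have "(x has_vector_derivative f (x t)) (at t within {0..t + 1})"
      by (rule has_vector_derivative_transform[rotated 2]) (use \<open>0 \<le> t\<close> integral_eq in auto)
    moreover have "at t within {0..t + 1} = at t within {0..}"
      by (rule at_within_nhd[of t "{t - 1<..<t + 1}"]) auto
    ultimately show "(x has_vector_derivative f (x t)) (at t within {0..})"
      by simp
  qed
qed

lemma has_vector_derivative_fst:
  "(x has_vector_derivative v) F \<Longrightarrow> ((\<lambda>t. fst (x t)) has_real_derivative fst v) F"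
  unfolding has_real_derivative_iff_has_vector_derivative has_vector_derivative_def
  by (drule has_derivative_fst) simp

lemma has_vector_derivative_snd:
  "(x has_vector_derivative v) F \<Longrightarrow> ((\<lambda>t. snd (x t)) has_real_derivative snd v) F"
  unfolding has_real_derivative_iff_has_vector_derivative has_vector_derivative_def
  by (drule has_derivative_snd) simp

lemma clamp_real:
  fixes a b u :: real
  assumes "a \<le> b"
  shows "clamp a b u = max a (min b u)"
  using assms unfolding clamp_def Basis_real_def by (auto simp: max_def min_def)

lemma lipschitz_on_clamp: "lipschitz_on 1 UNIV (clamp a b)"
  by (rule lipschitz_onI) (auto intro: dist_clamps_le_dist_args)

lemma lipschitz_on_compose_fst:
  assumes "lipschitz_on L UNIV g"
  shows "lipschitz_on L UNIV (\<lambda>p. g (fst p))"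
proof -
  have "lipschitz_on 1 UNIV fst"
    by (rule lipschitz_onI) (auto simp: dist_fst_le)
  then show ?thesis
    using lipschitz_on_compose2[of 1 UNIV fst L g] lipschitz_on_subset[OF assms] by auto
qed

lemma lipschitz_on_compose_snd:
  assumes "lipschitz_on L UNIV g"
  shows "lipschitz_on L UNIV (\<lambda>p. g (snd p))"
proof -
  have "lipschitz_on 1 UNIV snd"
    by (rule lipschitz_onI) (auto simp: dist_snd_le)
  then show ?thesis
    using lipschitz_on_compose2[of 1 UNIV snd L g] lipschitz_on_subset[OF assms] by auto
qed

lemma lipschitz_on_quartic:
  fixes R :: real
  assumes "0 \<le> R"
  shows "lipschitz_on (4 * R ^ 3) {0..R} (\<lambda>u. \<bar>u\<bar> ^ 3 * u)"
proof (rule lipschitz_onI)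
  fix u v assume uv: "u \<in> {0..R}" "v \<in> {0..R}"
  have "\<bar>u\<bar> ^ 3 * u - \<bar>v\<bar> ^ 3 * v = (u - v) * ((u + v) * (u\<^sup>2 + v\<^sup>2))"
    using uv by (simp add: power2_eq_square power3_eq_cube algebra_simps)
  then have "\<bar>\<bar>u\<bar> ^ 3 * u - \<bar>v\<bar> ^ 3 * v\<bar> = \<bar>u - v\<bar> * ((u + v) * (u\<^sup>2 + v\<^sup>2))"
    using uv by (simp add: abs_mult)
  also have "\<dots> \<le> \<bar>u - v\<bar> * ((2 * R) * (2 * R\<^sup>2))"
  proof -
    have "u\<^sup>2 \<le> R\<^sup>2" "v\<^sup>2 \<le> R\<^sup>2"
      using uv by (auto intro!: power_mono)
    then have "u\<^sup>2 + v\<^sup>2 \<le> 2 * R\<^sup>2"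
      by simp
    then show ?thesis
      using uv by (intro mult_left_mono mult_mono) auto
  qed
  finally show "dist (\<bar>u\<bar> ^ 3 * u) (\<bar>v\<bar> ^ 3 * v) \<le> 4 * R ^ 3 * dist u v"
    by (simp add: dist_real_def power2_eq_square power3_eq_cube mult_ac)
qed (use assms in simp)

lemma lipschitz_on_clamped_quartic:
  fixes R :: real
  assumes "0 \<le> R"
  shows "lipschitz_on (4 * R ^ 3) UNIV (\<lambda>u. \<bar>clamp 0 R u\<bar> ^ 3 * clamp 0 R u)"
proof -
  have "range (clamp 0 R) \<subseteq> {0..R}"
    using assms by (auto simp: clamp_real)
  from lipschitz_on_compose2[OF lipschitz_on_clamp lipschitz_on_subset[OF lipschitz_on_quartic[OF assms] this]]
  show ?thesis
    by simp
qed

lemma lipschitz_on_real_le: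
  fixes f :: "real \<Rightarrow> real"
  assumes "lipschitz_on L UNIV f"
  shows "f x \<le> f y + L * \<bar>x - y\<bar>"
  using lipschitz_onD[OF assms, of x y] by (simp add: dist_real_def abs_le_iff)

lemma power4_add_le:
  fixes a b :: real
  shows "(a + b) ^ 4 \<le> 8 * (a ^ 4 + b ^ 4)"
proof -
  have "(a + b) ^ 4 = ((a + b)\<^sup>2)\<^sup>2" by simp
  also have "\<dots> \<le> (2 * (a\<^sup>2 + b\<^sup>2))\<^sup>2"
  proof (rule power_mono)
    show "(a + b)\<^sup>2 \<le> 2 * (a\<^sup>2 + b\<^sup>2)"
      using sum_squares_ge_zero[of "a - b" 0] by (simp add: power2_eq_square algebra_simps)
  qed simp
  also have "\<dots> \<le> 8 * (a ^ 4 + b ^ 4)"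
    using sum_squares_ge_zero[of "a\<^sup>2 - b\<^sup>2" 0]
    by (simp add: power2_eq_square power4_eq_xxxx algebra_simps)
  finally show ?thesis .
qed

lemma affine_le_quartic_eventually:
  fixes A B d :: real
  assumes "0 < d"
  shows "\<forall>\<^sub>F w in at_top. A + B * w \<le> d * w ^ 4"
  using eventually_ge_at_top[of "max 1 ((\<bar>A\<bar> + \<bar>B\<bar>) / d)"]
proof eventually_elim
  case (elim w)
  then have "1 \<le> w" and "\<bar>A\<bar> + \<bar>B\<bar> \<le> d * w"
    using assms by (auto simp: field_simps)
  have "A \<le> \<bar>A\<bar> * w"
    using mult_left_mono[OF \<open>1 \<le> w\<close>, of "\<bar>A\<bar>"] by simp
  moreover have "B * w \<le> \<bar>B\<bar> * w"
    using \<open>1 \<le> w\<close> by (intro mult_right_mono) auto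
  ultimately have "A + B * w \<le> (\<bar>A\<bar> + \<bar>B\<bar>) * w"
    by (simp add: algebra_simps)
  also have "\<dots> \<le> d * w * w"
    using \<open>1 \<le> w\<close> \<open>\<bar>A\<bar> + \<bar>B\<bar> \<le> d * w\<close> by (intro mult_right_mono) auto
  also have "\<dots> \<le> d * w ^ 4"
  proof -
    have "w * w * 1 \<le> w * w * (w * w)"
      using \<open>1 \<le> w\<close> mult_mono[OF \<open>1 \<le> w\<close> \<open>1 \<le> w\<close>] by (intro mult_left_mono) auto
    then show ?thesis
      using assms by (simp add: power4_eq_xxxx mult.assoc)
  qed
  finally show ?case .
qed

section \<open>A barrier principle for scalar functions\<close>

lemma stays_below_if_derivative_nonpos_above:
  fixes phi phi' :: "real \<Rightarrow> real"
  assumes deriv: "\<And>t. 0 \<le> t \<Longrightarrow> (phi has_real_derivative phi' t) (at t within {0..})"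
    and init: "phi 0 \<le> K" and "0 < e"
    and nonpos: "\<And>t. 0 < t \<Longrightarrow> K < phi t \<Longrightarrow> phi t < K + e \<Longrightarrow> phi' t \<le> 0"
    and "0 \<le> t"
  shows "phi t \<le> K"
proof (rule ccontr)
  assume "\<not> phi t \<le> K"
  define c where "c = K + min (phi t - K) e / 2"
  have c: "K < c" "c < K + e" "c \<le> phi t"
    using \<open>\<not> phi t \<le> K\<close> \<open>0 < e\<close> unfolding c_def by (auto simp: min_def field_simps)
  have cont: "continuous_on {0..} phi"
    using deriv by (auto simp: continuous_on_eq_continuous_within intro: DERIV_continuous)
  have closed_preimage: "closed ({0..b} \<inter> phi -` S)" if "closed S" for b S
    using that by (intro continuous_closed_preimage continuous_on_subset[OF cont]) auto
  \<comment> \<open>t1 is the first time phi reaches c and s0 the last time before t1 with phi s0 \<le> K;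
      on (s0, t1) phi stays in the band (K, c), where phi' \<le> 0.\<close>
  define t1 where "t1 = Inf ({0..t} \<inter> phi -` {c..})"
  have t1: "0 \<le> t1" "t1 \<le> t" "c \<le> phi t1"
    using closed_contains_Inf[OF _ _ closed_preimage[of "{c..}" t]] c \<open>0 \<le> t\<close>
    unfolding t1_def by (fastforce simp: bdd_below_def)+
  have below_c: "phi s < c" if "0 \<le> s" "s < t1" for s
    using cInf_lower[of s "{0..t} \<inter> phi -` {c..}"] that t1 unfolding t1_def
    by (force simp: bdd_below_def)
  define s0 where "s0 = Sup ({0..t1} \<inter> phi -` {..K})"
  have s0: "0 \<le> s0" "s0 \<le> t1" "phi s0 \<le> K"
    using closed_contains_Sup[OF _ _ closed_preimage[of "{..K}" t1]] init t1
    unfolding s0_def by (fastforce simp: bdd_above_def)+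
  have above_K: "K < phi s" if "s0 < s" "s \<le> t1" for s
    using cSup_upper[of s "{0..t1} \<inter> phi -` {..K}"] that s0 unfolding s0_def
    by (force simp: bdd_above_def)
  have "s0 < t1"
    using s0 t1 c by (metis order.strict_iff_order order.trans not_le)
  have "phi t1 \<le> phi s0"
  proof (rule DERIV_nonpos_imp_decreasing_open[OF less_imp_le[OF \<open>s0 < t1\<close>]])
    fix s assume s: "s0 < s" "s < t1"
    then have "at s within {0..} = at s"
      using s0 by (intro at_within_interior) auto
    then show "\<exists>y. DERIV phi s :> y \<and> y \<le> 0"
      using deriv[of s] nonpos[of s] above_K[of s] below_c[of s] s s0 c by auto
  qed (use cont s0 in \<open>auto intro: continuous_on_subset\<close>)
  then show False
    using s0 t1 c by linarith
qed

lemma stays_nonneg_if_derivative_nonneg_below: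
  fixes y y' :: "real \<Rightarrow> real"
  assumes "\<And>t. 0 \<le> t \<Longrightarrow> (y has_real_derivative y' t) (at t within {0..})"
    and "0 \<le> y 0"
    and "\<And>t. 0 < t \<Longrightarrow> y t < 0 \<Longrightarrow> 0 \<le> y' t"
    and "0 \<le> t"
  shows "0 \<le> y t"
  using stays_below_if_derivative_nonpos_above[of "\<lambda>t. - y t" "\<lambda>t. - y' t" 0 1 t] assms
  by (force intro: DERIV_minus)

section \<open>The energy balance model\<close>

locale energy_balance_model =
  fixes gamma_a gamma_s lam q sigma_B eps_a La Ls :: real
    and beta_a beta_s :: "real \<Rightarrow> real"
  assumes gamma_a_pos: "0 < gamma_a" and gamma_s_pos: "0 < gamma_s"
    and lam_nonneg: "0 \<le> lam" and q_nonneg: "0 \<le> q" and sigma_B_pos: "0 < sigma_B"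
    and eps_a_pos: "0 < eps_a" and eps_a_less_2: "eps_a < 2"
    and lipschitz_beta_a: "lipschitz_on La UNIV beta_a"
    and lipschitz_beta_s: "lipschitz_on Ls UNIV beta_s"
    and beta_a_nonneg: "0 \<le> beta_a x" and beta_s_nonneg: "0 \<le> beta_s x"
begin

definition flux_a :: "real \<Rightarrow> real \<Rightarrow> real" where
  "flux_a a s = - lam * (a - s) + eps_a * sigma_B * \<bar>s\<bar> ^ 3 * s
                - 2 * eps_a * sigma_B * \<bar>a\<bar> ^ 3 * a + q * beta_a a"

definition flux_s :: "real \<Rightarrow> real \<Rightarrow> real" where
  "flux_s a s = - lam * (s - a) - sigma_B * \<bar>s\<bar> ^ 3 * s
                + eps_a * sigma_B * \<bar>a\<bar> ^ 3 * a + q * beta_s s"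

text \<open>Clamping both arguments, not only the quartic terms, keeps each flux nonnegative when its own
  temperature vanishes, whatever the other one is; this makes the quadrant invariant.\<close>

definition truncated_field :: "real \<Rightarrow> real \<times> real \<Rightarrow> real \<times> real" where
  "truncated_field R p =
     (flux_a (clamp 0 R (fst p)) (clamp 0 R (snd p)) / gamma_a,
      flux_s (clamp 0 R (fst p)) (clamp 0 R (snd p)) / gamma_s)"

definition energy :: "real \<Rightarrow> real \<Rightarrow> real" where
  "energy a s = (eps_a + 2) * gamma_a * a + 4 * eps_a * gamma_s * s"

lemma flux_a_nonneg_at_0: "0 \<le> s \<Longrightarrow> 0 \<le> flux_a 0 s"
  using lam_nonneg eps_a_pos sigma_B_pos q_nonneg beta_a_nonneg by (simp add: flux_a_def)

lemma flux_s_nonneg_at_0: "0 \<le> a \<Longrightarrow> 0 \<le> flux_s a 0"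
  using lam_nonneg eps_a_pos sigma_B_pos q_nonneg beta_s_nonneg by (simp add: flux_s_def)

lemma lipschitz_truncated_field:
  assumes "0 \<le> R"
  shows "\<exists>L. lipschitz_on L UNIV (truncated_field R)"
proof -
  let ?c = "clamp 0 R" and ?Q = "\<lambda>u. \<bar>clamp 0 R u\<bar> ^ 3 * clamp 0 R u"
  have Q: "lipschitz_on (4 * R ^ 3) UNIV ?Q"
    using assms by (rule lipschitz_on_clamped_quartic)
  have beta_a: "lipschitz_on (La * 1) UNIV (\<lambda>u. beta_a (?c u))"
    by (rule lipschitz_on_compose2[OF lipschitz_on_clamp lipschitz_on_subset[OF lipschitz_beta_a]]) auto
  have beta_s: "lipschitz_on (Ls * 1) UNIV (\<lambda>u. beta_s (?c u))"
    by (rule lipschitz_on_compose2[OF lipschitz_on_clamp lipschitz_on_subset[OF lipschitz_beta_s]]) auto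
  have field: "truncated_field R = (\<lambda>p.
      (inverse gamma_a * (- lam * (?c (fst p) - ?c (snd p)) + (eps_a * sigma_B) * ?Q (snd p)
          - (2 * eps_a * sigma_B) * ?Q (fst p) + q * beta_a (?c (fst p))),
       inverse gamma_s * (- lam * (?c (snd p) - ?c (fst p)) - sigma_B * ?Q (snd p)
          + (eps_a * sigma_B) * ?Q (fst p) + q * beta_s (?c (snd p)))))"
    by (auto simp: truncated_field_def flux_a_def flux_s_def field_simps)
  show ?thesis
    unfolding field
    by (rule exI, (rule lipschitz_on_Pair lipschitz_on_add lipschitz_on_diff lipschitz_on_cmult_real
        lipschitz_on_compose_fst[OF lipschitz_on_clamp] lipschitz_on_compose_snd[OF lipschitz_on_clamp]
        lipschitz_on_compose_fst[OF Q] lipschitz_on_compose_snd[OF Q]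
        lipschitz_on_compose_fst[OF beta_a] lipschitz_on_compose_snd[OF beta_s])+)
qed

lemma energy_rate_le:
  obtains A B where "\<And>a s. 0 \<le> a \<Longrightarrow> 0 \<le> s \<Longrightarrow>
    (eps_a + 2) * flux_a a s + 4 * eps_a * flux_s a s
      \<le> A + B * (a + s) - sigma_B * eps_a * (2 - eps_a) / 8 * (a + s) ^ 4"
proof (rule that[of "q * (4 * beta_a 0 + 8 * beta_s 0)" "4 * lam + 4 * q * La + 8 * q * Ls"])
  fix a s :: real
  assume a: "0 \<le> a" and s: "0 \<le> s"
  let ?d = "sigma_B * eps_a * (2 - eps_a)"
  have rate: "(eps_a + 2) * flux_a a s + 4 * eps_a * flux_s a s
      = lam * ((3 * eps_a - 2) * (a - s)) + q * ((eps_a + 2) * beta_a a + 4 * eps_a * beta_s s)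
        - ?d * (2 * a ^ 4 + s ^ 4)"
    using a s by (simp add: flux_a_def flux_s_def power4_eq_xxxx power3_eq_cube algebra_simps)
  have "eps_a * a \<le> 2 * a" "0 \<le> eps_a * s"
    using a s eps_a_pos eps_a_less_2 mult_right_mono[of eps_a 2 a] by simp_all
  then have "(3 * eps_a - 2) * (a - s) \<le> 4 * (a + s)"
    using a s by argo
  from mult_left_mono[OF this lam_nonneg]
  have exchange: "lam * ((3 * eps_a - 2) * (a - s)) \<le> lam * (4 * (a + s))" .
  have "(eps_a + 2) * beta_a a + 4 * eps_a * beta_s s \<le> 4 * beta_a a + 8 * beta_s s"
    using eps_a_less_2 beta_a_nonneg[of a] beta_s_nonneg[of s] by (intro add_mono mult_right_mono) auto
  also have "\<dots> \<le> 4 * (beta_a 0 + La * a) + 8 * (beta_s 0 + Ls * s)"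
    using lipschitz_on_real_le[OF lipschitz_beta_a, of a 0] lipschitz_on_real_le[OF lipschitz_beta_s, of s 0] a s
    by simp
  also have "\<dots> \<le> 4 * beta_a 0 + 8 * beta_s 0 + (4 * La + 8 * Ls) * (a + s)"
    using a s lipschitz_on_nonneg[OF lipschitz_beta_a] lipschitz_on_nonneg[OF lipschitz_beta_s]
    by (simp add: algebra_simps)
  finally have "(eps_a + 2) * beta_a a + 4 * eps_a * beta_s s
      \<le> 4 * beta_a 0 + 8 * beta_s 0 + (4 * La + 8 * Ls) * (a + s)" .
  from mult_left_mono[OF this q_nonneg]
  have forcing: "q * ((eps_a + 2) * beta_a a + 4 * eps_a * beta_s s)
      \<le> q * (4 * beta_a 0 + 8 * beta_s 0 + (4 * La + 8 * Ls) * (a + s))" .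
  have "(a + s) ^ 4 \<le> 8 * (2 * a ^ 4 + s ^ 4)"
    using power4_add_le[of a s] zero_le_power[OF a, of 4] by argo
  then have radiation: "?d / 8 * (a + s) ^ 4 \<le> ?d * (2 * a ^ 4 + s ^ 4)"
    using sigma_B_pos eps_a_pos eps_a_less_2 by simp
  show "(eps_a + 2) * flux_a a s + 4 * eps_a * flux_s a s
      \<le> q * (4 * beta_a 0 + 8 * beta_s 0) + (4 * lam + 4 * q * La + 8 * q * Ls) * (a + s)
        - ?d / 8 * (a + s) ^ 4"
    unfolding rate using exchange forcing radiation by (simp add: algebra_simps)
qed

lemma energy_rate_nonpos_above:
  obtains K where "\<And>a s. 0 \<le> a \<Longrightarrow> 0 \<le> s \<Longrightarrow> K \<le> energy a s \<Longrightarrow>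
    (eps_a + 2) * flux_a a s + 4 * eps_a * flux_s a s \<le> 0"
proof -
  let ?d = "sigma_B * eps_a * (2 - eps_a) / 8"
  obtain A B where rate: "\<And>a s. 0 \<le> a \<Longrightarrow> 0 \<le> s \<Longrightarrow>
      (eps_a + 2) * flux_a a s + 4 * eps_a * flux_s a s \<le> A + B * (a + s) - ?d * (a + s) ^ 4"
    using energy_rate_le by blast
  have "0 < ?d"
    using sigma_B_pos eps_a_pos eps_a_less_2 by simp
  then obtain W where W: "\<And>w. W \<le> w \<Longrightarrow> A + B * w \<le> ?d * w ^ 4"
    using affine_le_quartic_eventually[of ?d A B] by (auto simp: eventually_at_top_linorder)
  define M where "M = (eps_a + 2) * gamma_a + 4 * eps_a * gamma_s"
  have "0 < M"
    using eps_a_pos gamma_a_pos gamma_s_pos by (simp add: M_def add_pos_pos)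
  show thesis
  proof (rule that[of "M * W"])
    fix a s :: real
    assume a: "0 \<le> a" and s: "0 \<le> s" and "M * W \<le> energy a s"
    have "energy a s \<le> M * (a + s)"
      using a s eps_a_pos gamma_a_pos gamma_s_pos
      by (simp add: energy_def M_def algebra_simps add_mono mult_left_mono)
    with \<open>M * W \<le> energy a s\<close> \<open>0 < M\<close> have "W \<le> a + s"
      by (metis order.trans mult_le_cancel_left_pos)
    then show "(eps_a + 2) * flux_a a s + 4 * eps_a * flux_s a s \<le> 0"
      using rate[OF a s] W by fastforce
  qed
qed

lemma energy_bounds_components:
  assumes "0 \<le> a" and "0 \<le> s"
  shows "max a s \<le> energy a s / min ((eps_a + 2) * gamma_a) (4 * eps_a * gamma_s)"
proof -
  let ?wa = "(eps_a + 2) * gamma_a" and ?ws = "4 * eps_a * gamma_s"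
  have "0 < ?wa" "0 < ?ws"
    using eps_a_pos gamma_a_pos gamma_s_pos by simp_all
  then have "min ?wa ?ws * a \<le> ?wa * a" "min ?wa ?ws * s \<le> ?ws * s"
    "0 \<le> ?wa * a" "0 \<le> ?ws * s"
    using assms by (simp_all add: mult_right_mono)
  then have "min ?wa ?ws * max a s \<le> energy a s"
    by (simp add: energy_def max_def)
  moreover have "0 < min ?wa ?ws"
    using \<open>0 < ?wa\<close> \<open>0 < ?ws\<close> by simp
  ultimately show ?thesis
    by (metis pos_le_divide_eq mult.commute)
qed

lemma truncated_field_eq:
  assumes "fst p \<in> {0..R}" and "snd p \<in> {0..R}"
  shows "truncated_field R p = (flux_a (fst p) (snd p) / gamma_a, flux_s (fst p) (snd p) / gamma_s)"
  using assms by (simp add: truncated_field_def clamp_real)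

lemma truncated_solution_nonneg:
  assumes "0 \<le> R"
    and ode: "\<And>t. 0 \<le> t \<Longrightarrow> (x has_vector_derivative truncated_field R (x t)) (at t within {0..})"
    and "0 \<le> fst (x 0)" and "0 \<le> snd (x 0)" and "0 \<le> t"
  shows "0 \<le> fst (x t)" and "0 \<le> snd (x t)"
proof -
  have clamp_neg: "clamp 0 R u = 0" if "u < 0" for u
    using that \<open>0 \<le> R\<close> by (simp add: clamp_real)
  have clamp_nonneg: "0 \<le> clamp 0 R u" for u
    using \<open>0 \<le> R\<close> by (simp add: clamp_real)
  show "0 \<le> fst (x t)"
  proof (rule stays_nonneg_if_derivative_nonneg_below[OF has_vector_derivative_fst[OF ode] _ _ \<open>0 \<le> t\<close>])
    show "0 \<le> fst (x 0)" by fact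
    fix s assume "fst (x s) < 0"
    then show "0 \<le> fst (truncated_field R (x s))"
      using flux_a_nonneg_at_0[OF clamp_nonneg] gamma_a_pos by (simp add: truncated_field_def clamp_neg)
  qed
  show "0 \<le> snd (x t)"
  proof (rule stays_nonneg_if_derivative_nonneg_below[OF has_vector_derivative_snd[OF ode] _ _ \<open>0 \<le> t\<close>])
    show "0 \<le> snd (x 0)" by fact
    fix s assume "snd (x s) < 0"
    then show "0 \<le> snd (truncated_field R (x s))"
      using flux_s_nonneg_at_0[OF clamp_nonneg] gamma_s_pos by (simp add: truncated_field_def clamp_neg)
  qed
qed

lemma truncated_solution_energy_le:
  assumes ode: "\<And>t. 0 \<le> t \<Longrightarrow> (x has_vector_derivative truncated_field R (x t)) (at t within {0..})"
    and nonneg: "\<And>t. 0 \<le> t \<Longrightarrow> 0 \<le> fst (x t) \<and> 0 \<le> snd (x t)"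
    and dissipative: "\<And>a s. 0 \<le> a \<Longrightarrow> 0 \<le> s \<Longrightarrow> K \<le> energy a s \<Longrightarrow>
                        (eps_a + 2) * flux_a a s + 4 * eps_a * flux_s a s \<le> 0"
    and bounded: "\<And>a s. 0 \<le> a \<Longrightarrow> 0 \<le> s \<Longrightarrow> energy a s < K + 1 \<Longrightarrow> a \<le> R \<and> s \<le> R"
    and "energy (fst (x 0)) (snd (x 0)) \<le> K" and "0 \<le> t"
  shows "energy (fst (x t)) (snd (x t)) \<le> K"
proof (rule stays_below_if_derivative_nonpos_above[where phi = "\<lambda>t. energy (fst (x t)) (snd (x t))" and e = 1])
  let ?rate = "\<lambda>t. (eps_a + 2) * gamma_a * fst (truncated_field R (x t))
                  + 4 * eps_a * gamma_s * snd (truncated_field R (x t))"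
  show "((\<lambda>t. energy (fst (x t)) (snd (x t))) has_real_derivative ?rate t) (at t within {0..})"
    if "0 \<le> t" for t
    using DERIV_add[OF DERIV_cmult[OF has_vector_derivative_fst[OF ode[OF that]]]
        DERIV_cmult[OF has_vector_derivative_snd[OF ode[OF that]]]]
    by (simp add: energy_def)
  fix s :: real
  assume "0 < s" and "K < energy (fst (x s)) (snd (x s))" and "energy (fst (x s)) (snd (x s)) < K + 1"
  then have "fst (x s) \<in> {0..R}" "snd (x s) \<in> {0..R}"
    using nonneg[of s] bounded[of "fst (x s)" "snd (x s)"] by auto
  then show "?rate s \<le> 0"
    using dissipative[of "fst (x s)" "snd (x s)"] nonneg[of s] \<open>0 < s\<close>
      \<open>K < energy (fst (x s)) (snd (x s))\<close> gamma_a_pos gamma_s_pos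
    by (simp add: truncated_field_eq)
qed (use assms in auto)

lemma truncated_solutions_bounded:
  assumes "0 \<le> Ta0" and "0 \<le> Ts0"
  obtains R where "0 \<le> R"
    and "\<And>x t. x 0 = (Ta0, Ts0) \<Longrightarrow>
           (\<And>t. 0 \<le> t \<Longrightarrow> (x has_vector_derivative truncated_field R (x t)) (at t within {0..})) \<Longrightarrow>
           0 \<le> t \<Longrightarrow> fst (x t) \<in> {0..R} \<and> snd (x t) \<in> {0..R}"
proof -
  obtain K0 where dissipative: "\<And>a s. 0 \<le> a \<Longrightarrow> 0 \<le> s \<Longrightarrow> K0 \<le> energy a s \<Longrightarrow>
      (eps_a + 2) * flux_a a s + 4 * eps_a * flux_s a s \<le> 0"
    using energy_rate_nonpos_above by blast
  define K where "K = max K0 (energy Ta0 Ts0)"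
  define m where "m = min ((eps_a + 2) * gamma_a) (4 * eps_a * gamma_s)"
  define R where "R = (K + 1) / m"
  have "0 < m"
    using eps_a_pos gamma_a_pos gamma_s_pos by (simp add: m_def)
  have bounded: "a \<le> R \<and> s \<le> R" if "0 \<le> a" "0 \<le> s" "energy a s < K + 1" for a s
  proof -
    have "energy a s / m \<le> R"
      using that(3) \<open>0 < m\<close> unfolding R_def by (simp add: divide_right_mono)
    then show ?thesis
      using energy_bounds_components[OF that(1,2)] unfolding m_def by simp
  qed
  have "0 \<le> energy Ta0 Ts0"
    using assms eps_a_pos gamma_a_pos gamma_s_pos by (simp add: energy_def)
  then have "0 \<le> R"
    using \<open>0 < m\<close> by (simp add: R_def K_def)
  then show thesis
  proof (rule that)
    fix x :: "real \<Rightarrow> real \<times> real" and t :: real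
    assume x0: "x 0 = (Ta0, Ts0)" and "0 \<le> t"
      and ode: "\<And>t. 0 \<le> t \<Longrightarrow> (x has_vector_derivative truncated_field R (x t)) (at t within {0..})"
    have nonneg: "0 \<le> fst (x t) \<and> 0 \<le> snd (x t)" if "0 \<le> t" for t
      using truncated_solution_nonneg[OF \<open>0 \<le> R\<close> ode] x0 assms that by simp
    have "energy (fst (x t)) (snd (x t)) \<le> K"
      using truncated_solution_energy_le[OF ode nonneg _ bounded] dissipative x0 \<open>0 \<le> t\<close>
      by (simp add: K_def)
    then show "fst (x t) \<in> {0..R} \<and> snd (x t) \<in> {0..R}"
      using bounded[of "fst (x t)" "snd (x t)"] nonneg[OF \<open>0 \<le> t\<close>] by auto
  qed
qed

theorem global_solution:
  assumes "0 \<le> Ta0" and "0 \<le> Ts0"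
  obtains Ta Ts where "Ta 0 = Ta0" and "Ts 0 = Ts0"
    and "\<And>t. 0 \<le> t \<Longrightarrow> (Ta has_real_derivative flux_a (Ta t) (Ts t) / gamma_a) (at t within {0..})"
    and "\<And>t. 0 \<le> t \<Longrightarrow> (Ts has_real_derivative flux_s (Ta t) (Ts t) / gamma_s) (at t within {0..})"
proof -
  obtain R where "0 \<le> R" and bounded: "\<And>x t. x 0 = (Ta0, Ts0) \<Longrightarrow>
      (\<And>t. 0 \<le> t \<Longrightarrow> (x has_vector_derivative truncated_field R (x t)) (at t within {0..})) \<Longrightarrow>
      0 \<le> t \<Longrightarrow> fst (x t) \<in> {0..R} \<and> snd (x t) \<in> {0..R}"
    using truncated_solutions_bounded[OF assms] by blast
  obtain L where "lipschitz_on L UNIV (truncated_field R)"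
    using lipschitz_truncated_field[OF \<open>0 \<le> R\<close>] by blast
  then obtain x where x0: "x 0 = (Ta0, Ts0)"
    and ode: "\<And>t. 0 \<le> t \<Longrightarrow> (x has_vector_derivative truncated_field R (x t)) (at t within {0..})"
    by (rule picard_global_solution[where \<xi> = "(Ta0, Ts0)"]) auto
  have untruncated: "truncated_field R (x t) = (flux_a (fst (x t)) (snd (x t)) / gamma_a,
                                                 flux_s (fst (x t)) (snd (x t)) / gamma_s)"
    if "0 \<le> t" for t
    using bounded[OF x0 ode that] by (simp add: truncated_field_eq)
  show thesis
  proof (rule that[of "\<lambda>t. fst (x t)" "\<lambda>t. snd (x t)"])
    show "fst (x 0) = Ta0" "snd (x 0) = Ts0"
      using x0 by simp_all
  next
    fix t :: real assume "0 \<le> t"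
    show "((\<lambda>t. fst (x t)) has_real_derivative flux_a (fst (x t)) (snd (x t)) / gamma_a) (at t within {0..})"
      using has_vector_derivative_fst[OF ode[OF \<open>0 \<le> t\<close>]] by (simp add: untruncated[OF \<open>0 \<le> t\<close>])
    show "((\<lambda>t. snd (x t)) has_real_derivative flux_s (fst (x t)) (snd (x t)) / gamma_s) (at t within {0..})"
      using has_vector_derivative_snd[OF ode[OF \<open>0 \<le> t\<close>]] by (simp add: untruncated[OF \<open>0 \<le> t\<close>])
  qed
qed

end

theorem corollary4p3:
  fixes gamma_a gamma_s lam q sigma_B eps_a Ta0 Ts0 :: real
    and beta_a beta_s :: "real \<Rightarrow> real"
  assumes "gamma_a > 0" and "gamma_s > 0" and "lam \<ge> 0" and "q > 0" and "sigma_B > 0"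
    and "0 < eps_a" and "eps_a < 2"
    and "\<exists>L. lipschitz_on L UNIV beta_a" and "\<exists>L. lipschitz_on L UNIV beta_s"
    and "\<forall>x. beta_a x \<ge> 0" and "\<forall>x. beta_s x > 0"
    and "Ta0 \<ge> 0" and "Ts0 \<ge> 0"
  shows "\<exists>Ta Ts :: real \<Rightarrow> real. Ta 0 = Ta0 \<and> Ts 0 = Ts0 \<and>
    (\<forall>t\<ge>0. \<exists>dTa dTs.
       (Ta has_real_derivative dTa) (at t within {0..}) \<and>
       (Ts has_real_derivative dTs) (at t within {0..}) \<and>
       gamma_a * dTa = - lam * (Ta t - Ts t) + eps_a * sigma_B * \<bar>Ts t\<bar>^3 * Ts t
                    - 2 * eps_a * sigma_B * \<bar>Ta t\<bar>^3 * Ta t + q * beta_a (Ta t) \<and>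
       gamma_s * dTs = - lam * (Ts t - Ta t) - sigma_B * \<bar>Ts t\<bar>^3 * Ts t
                    + eps_a * sigma_B * \<bar>Ta t\<bar>^3 * Ta t + q * beta_s (Ts t))"
proof -
  obtain La Ls where "lipschitz_on La UNIV beta_a" and "lipschitz_on Ls UNIV beta_s"
    using assms(8,9) by blast
  then interpret energy_balance_model gamma_a gamma_s lam q sigma_B eps_a La Ls beta_a beta_s
    using assms by unfold_locales (auto intro: less_imp_le)
  obtain Ta Ts where "Ta 0 = Ta0" and "Ts 0 = Ts0"
    and Ta: "\<And>t. 0 \<le> t \<Longrightarrow> (Ta has_real_derivative flux_a (Ta t) (Ts t) / gamma_a) (at t within {0..})"
    and Ts: "\<And>t. 0 \<le> t \<Longrightarrow> (Ts has_real_derivative flux_s (Ta t) (Ts t) / gamma_s) (at t within {0..})"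
    using global_solution[OF assms(12,13)] by blast
  have "\<exists>dTa dTs.
       (Ta has_real_derivative dTa) (at t within {0..}) \<and>
       (Ts has_real_derivative dTs) (at t within {0..}) \<and>
       gamma_a * dTa = - lam * (Ta t - Ts t) + eps_a * sigma_B * \<bar>Ts t\<bar>^3 * Ts t
                    - 2 * eps_a * sigma_B * \<bar>Ta t\<bar>^3 * Ta t + q * beta_a (Ta t) \<and>
       gamma_s * dTs = - lam * (Ts t - Ta t) - sigma_B * \<bar>Ts t\<bar>^3 * Ts t
                    + eps_a * sigma_B * \<bar>Ta t\<bar>^3 * Ta t + q * beta_s (Ts t)" if "0 \<le> t" for t
    using Ta[OF that] Ts[OF that] assms(1,2)
    by (intro exI[of _ "flux_a (Ta t) (Ts t) / gamma_a"] exI[of _ "flux_s (Ta t) (Ts t) / gamma_s"])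
      (simp add: flux_a_def flux_s_def)
  with \<open>Ta 0 = Ta0\<close> \<open>Ts 0 = Ts0\<close> show ?thesis
    by blast
qed

end
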